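(* Let $k\ge1$ and $n\ge1$, and let $a_1,\dots,a_n\in A$ be such that for each $i$ there is an integer $p_i>0$ with $a_i\in A(100^{k^2}p_i-1)$. Suppose $a_i\notin B_1+\dots+B_k$ for every $i$. Then for all non-negative integers $m_1,\dots,m_n$, $$a_1x_{m_1}a_2x_{m_2}\cdots a_nx_{m_n}\notin B_1+\dots+B_k.$$
   Context: Let $K$ be a field and $A$ the free associative (non-unital) $K$-algebra on free generators $x_0,x_1,x_2,\dots$, with $K$-basis of monomials; $A^1$ is $A$ with unity adjoined. For $n\ge1$, $A(n)$ is the $K$-span of monomials of length $n$, and $A(0)=K$. For a monomial $s=x_{i_1}\cdots x_{i_n}$ write $s[q]=x_{i_q}$. For $j\ge1$, $Z_j$ is the set of all elements $a\in A$ of one of the forms: (1) $a=\kappa s$, $\kappa\in K$, $s$ a monomial of length $100^{j^2}-1$ with $s[3^p\cdot100^{(j-1)^2}]=s[3^q\cdot100^{(j-1)^2}]$ for some $0\le p<q\le j$; (2) $a=\kappa(s_1+s_2)$, $\kappa\in K$, $s_1,s_2$ monomials of length $100^{j^2}-1$, with integers $0\le p<q\le j$ and $l_1>l_2\ge0$ such that $s_1$ has $x_{l_1}$ at position $3^p\cdot100^{(j-1)^2}$ and $x_{l_2}$ at position $3^q\cdot100^{(j-1)^2}$, $s_2$ has $x_{l_2}$ and $x_{l_1}$ at these positions respectively, and $s_1,s_2$ agree at all other positions. $B_j=\sum_{m\ge0}A(m\cdot100^{j^2})\,Z_j\,A^1$ (the $K$-span of products $uzv$ with $u\in A(m\cdot100^{j^2})$,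 $m\ge0$, $z\in Z_j$, $v\in A^1$). *)

theory Defs
  imports Main
begin

text \<open>Elements of the free unital associative K-algebra on generators x_0, x_1, ...
  are represented as finitely supported coefficient functions on words (nat list);
  the word [i_1,...,i_n] stands for the monomial x_{i_1}...x_{i_n}, the empty word for 1.\<close>

type_synonym 'k elt = "nat list \<Rightarrow> 'k"

definition fsupp :: "'k::zero elt \<Rightarrow> bool" where
  "fsupp f \<longleftrightarrow> finite {w. f w \<noteq> 0}"

definition A1 :: "'k::field elt set" where
  "A1 = {f. fsupp f}"

definition Afree :: "'k::field elt set" where
  "Afree = {f. fsupp f \<and> f [] = 0}"

definition Ahom :: "nat \<Rightarrow> 'k::field elt set" where
  "Ahom n = {f. fsupp f \<and> (\<forall>w. f w \<noteq> 0 \<longrightarrow> length w = n)}"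

definition mono :: "nat list \<Rightarrow> 'k::field elt" where
  "mono s = (\<lambda>w. if w = s then 1 else 0)"

definition gen :: "nat \<Rightarrow> 'k::field elt" where
  "gen i = mono [i]"

definition smul :: "'k::field \<Rightarrow> 'k elt \<Rightarrow> 'k elt" where
  "smul c f = (\<lambda>w. c * f w)"

definition amul :: "'k::field elt \<Rightarrow> 'k elt \<Rightarrow> 'k elt" where
  "amul f g = (\<lambda>w. \<Sum>i\<in>{0..length w}. f (take i w) * g (drop i w))"

inductive_set kspan :: "'k::field elt set \<Rightarrow> 'k elt set" for S where
  zero: "(\<lambda>_. 0) \<in> kspan S"
| base: "x \<in> S \<Longrightarrow> x \<in> kspan S"
| add: "x \<in> kspan S \<Longrightarrow> y \<in> kspan S \<Longrightarrow> (\<lambda>w. x w + y w) \<in> kspan S"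
| scal: "x \<in> kspan S \<Longrightarrow> smul c x \<in> kspan S"

text \<open>Length 100^(j^2) - 1 and (1-based) positions 3^p * 100^((j-1)^2).
  For a list s, the 1-based entry s[q] is s ! (q - 1).\<close>
definition Zlen :: "nat \<Rightarrow> nat" where
  "Zlen j = 100 ^ (j^2) - 1"

definition Zpos :: "nat \<Rightarrow> nat \<Rightarrow> nat" where
  "Zpos p j = 3 ^ p * 100 ^ ((j - 1)^2)"

definition Zset :: "nat \<Rightarrow> 'k::field elt set" where
  "Zset j = {a.
     (\<exists>\<kappa> s. length s = Zlen j \<and> a = smul \<kappa> (mono s) \<and>
        (\<exists>p q. p < q \<and> q \<le> j \<and> s ! (Zpos p j - 1) = s ! (Zpos q j - 1)))
   \<or> (\<exists>\<kappa> s1 s2 p q l1 l2. length s1 = Zlen j \<and> length s2 = Zlen j \<and>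
        p < q \<and> q \<le> j \<and> l2 < l1 \<and>
        s1 ! (Zpos p j - 1) = l1 \<and> s1 ! (Zpos q j - 1) = l2 \<and>
        s2 ! (Zpos p j - 1) = l2 \<and> s2 ! (Zpos q j - 1) = l1 \<and>
        (\<forall>t < Zlen j. t \<noteq> Zpos p j - 1 \<and> t \<noteq> Zpos q j - 1 \<longrightarrow> s1 ! t = s2 ! t) \<and>
        a = smul \<kappa> (\<lambda>w. mono s1 w + mono s2 w))}"

definition Bgen :: "nat \<Rightarrow> 'k::field elt set" where
  "Bgen j = {amul (amul u z) v | u z v m. u \<in> Ahom (m * 100 ^ (j^2)) \<and> z \<in> Zset j \<and> v \<in> A1}"

definition Bj :: "nat \<Rightarrow> 'k::field elt set" where
  "Bj j = kspan (Bgen j)"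

definition Bsum :: "nat \<Rightarrow> 'k::field elt set" where
  "Bsum k = {(\<lambda>w. \<Sum>j\<in>{1..k}. b j w) | b. \<forall>j\<in>{1..k}. b j \<in> Bj j}"

definition interleave :: "nat \<Rightarrow> (nat \<Rightarrow> 'k::field elt) \<Rightarrow> (nat \<Rightarrow> nat) \<Rightarrow> 'k elt" where
  "interleave n a m = foldl (\<lambda>acc i. amul (amul acc (a i)) (gen (m i))) (mono []) [1..<n+1]"

end

theory Submission
  imports Defs "HOL.Vector_Spaces" "HOL-Library.Function_Algebras"
begin

text \<open>Call a linear form \<open>\<Psi>\<close> on words B-annihilating if it vanishes on every
  translate \<open>x z y\<close> of an element \<open>z \<in> Z\<^sub>j\<close> (\<open>j \<le> k\<close>) whose left factor \<open>x\<close> is a monomial of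
  length divisible by \<open>N\<^sub>j = 100^(j^2)\<close>; such forms vanish on \<open>B\<^sub>1 + \<dots> + B\<^sub>k\<close>, and since
  \<open>B\<^sub>1 + \<dots> + B\<^sub>k\<close> is a subspace, every \<open>a\<^sub>i\<close> outside it is detected by one of them.
  The only property of \<open>Z\<^sub>j\<close> that matters is that its elements are homogeneous of
  degree \<open>N\<^sub>j - 1\<close>, so a placed element of \<open>Z\<^sub>j\<close> can never straddle a position divisible
  by \<open>N\<^sub>j\<close>. Consequently, splitting a word at a length divisible by \<open>N\<^sub>k\<close> and
  multiplying two B-annihilating forms on the pieces gives a B-annihilating form, and
  so does reading a fixed last letter \<open>x\<^sub>c\<close> off words of length divisible by \<open>N\<^sub>k\<close>.
  Multiplying the forms detecting the \<open>a\<^sub>i\<close> in this way yields a B-annihilating form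
  that does not vanish on \<open>a\<^sub>1 x\<^sub>m\<^sub>1 \<cdots> a\<^sub>n x\<^sub>m\<^sub>n\<close>.\<close>

section \<open>Pairing elements with forms on words\<close>

definition supp :: "'k::zero elt \<Rightarrow> nat list set" where
  "supp f = {w. f w \<noteq> 0}"

text \<open>\<open>pair f \<psi>\<close> evaluates at \<open>f\<close> the linear form taking the values \<open>\<psi>\<close> on monomials;
  it is meaningful only for finitely supported \<open>f\<close>.\<close>

definition pair :: "'k::field elt \<Rightarrow> 'k elt \<Rightarrow> 'k" where
  "pair f \<psi> = (\<Sum>w\<in>supp f. f w * \<psi> w)"

lemma fsupp_iff_finite_supp: "fsupp f \<longleftrightarrow> finite (supp f)"
  by (simp add: fsupp_def supp_def)

lemma pair_eq_sum_superset:
  "finite T \<Longrightarrow> supp f \<subseteq> T \<Longrightarrow> pair f \<psi> = (\<Sum>w\<in>T. f w * \<psi> w)"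
  unfolding pair_def by (rule sum.mono_neutral_left) (auto simp: supp_def)

lemma pair_cong: "(\<And>w. f w \<noteq> 0 \<Longrightarrow> \<psi> w = \<phi> w) \<Longrightarrow> pair f \<psi> = pair f \<phi>"
  unfolding pair_def supp_def by (rule sum.cong) auto

lemma pair_eq_0: "(\<And>w. f w \<noteq> 0 \<Longrightarrow> \<psi> w = 0) \<Longrightarrow> pair f \<psi> = 0"
  unfolding pair_def supp_def by (rule sum.neutral) auto

lemma pair_cmult: "pair f (\<lambda>w. c * \<psi> w) = c * pair f \<psi>"
  unfolding pair_def sum_distrib_left by (rule sum.cong) (auto simp: algebra_simps)

lemma supp_mono: "supp (mono s :: 'k::field elt) = {s}"
  by (auto simp: supp_def mono_def)

lemma fsupp_mono: "fsupp (mono s :: 'k::field elt)"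
  by (simp add: fsupp_iff_finite_supp supp_mono)

lemma pair_mono: "pair (mono s) \<psi> = \<psi> s"
  unfolding pair_def supp_mono by (simp add: mono_def)

lemma fsupp_add: "fsupp f \<Longrightarrow> fsupp g \<Longrightarrow> fsupp (\<lambda>w. f w + (g w :: 'k::field))"
  unfolding fsupp_iff_finite_supp
  by (rule finite_subset[of _ "supp f \<union> supp g"]) (auto simp: supp_def)

lemma fsupp_smul: "fsupp f \<Longrightarrow> fsupp (smul c f)"
  unfolding fsupp_iff_finite_supp
  by (rule finite_subset[of _ "supp f"]) (auto simp: supp_def smul_def)

lemma pair_add:
  fixes f g :: "'k::field elt"
  assumes "fsupp f" "fsupp g"
  shows "pair (\<lambda>w. f w + g w) \<psi> = pair f \<psi> + pair g \<psi>"
proof -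
  let ?T = "supp f \<union> supp g"
  have T: "finite ?T" using assms by (simp add: fsupp_iff_finite_supp)
  have "pair (\<lambda>w. f w + g w) \<psi> = (\<Sum>w\<in>?T. (f w + g w) * \<psi> w)"
    by (rule pair_eq_sum_superset[OF T]) (auto simp: supp_def)
  also have "\<dots> = pair f \<psi> + pair g \<psi>"
    by (simp add: sum.distrib distrib_right pair_eq_sum_superset[OF T])
  finally show ?thesis .
qed

lemma pair_smul: "pair (smul c f) \<psi> = c * pair f \<psi>"
proof (cases "c = 0")
  case True
  then show ?thesis by (simp add: pair_def smul_def supp_def)
next
  case False
  then have "supp (smul c f) = supp f" by (auto simp: supp_def smul_def)
  then show ?thesis by (simp add: pair_def smul_def sum_distrib_left mult.assoc)
qed

lemma amul_eq_sum_factorizations: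
  fixes f g :: "'k::field elt"
  assumes "fsupp f" "fsupp g"
  shows "amul f g w = (\<Sum>(x, y)\<in>{(x, y)\<in>supp f \<times> supp g. x @ y = w}. f x * g y)"
proof -
  let ?I = "{i\<in>{0..length w}. take i w \<in> supp f \<and> drop i w \<in> supp g}"
  have "amul f g w = (\<Sum>i\<in>?I. f (take i w) * g (drop i w))"
    unfolding amul_def by (rule sum.mono_neutral_right) (auto simp: supp_def)
  also have "\<dots> = (\<Sum>(x, y)\<in>{(x, y)\<in>supp f \<times> supp g. x @ y = w}. f x * g y)"
    by (rule sum.reindex_bij_witness[where i="\<lambda>(x, y). length x" and j="\<lambda>i. (take i w, drop i w)"])
      auto
  finally show ?thesis .
qed

lemma supp_amul:
  fixes f g :: "'k::field elt"
  assumes "fsupp f" "fsupp g"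
  shows "supp (amul f g) \<subseteq> (\<lambda>(x, y). x @ y) ` (supp f \<times> supp g)"
proof
  fix w assume "w \<in> supp (amul f g)"
  then have "(\<Sum>(x, y)\<in>{(x, y)\<in>supp f \<times> supp g. x @ y = w}. f x * g y) \<noteq> 0"
    by (simp add: supp_def amul_eq_sum_factorizations[OF assms])
  then have "{(x, y)\<in>supp f \<times> supp g. x @ y = w} \<noteq> {}"
    by (metis sum.empty)
  then show "w \<in> (\<lambda>(x, y). x @ y) ` (supp f \<times> supp g)" by force
qed

lemma fsupp_amul:
  fixes f g :: "'k::field elt"
  assumes "fsupp f" "fsupp g"
  shows "fsupp (amul f g)"
  using supp_amul[OF assms] assms by (simp add: fsupp_iff_finite_supp finite_subset)

lemma pair_amul_double_sum:
  fixes f g :: "'k::field elt"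
  assumes "fsupp f" "fsupp g"
  shows "pair (amul f g) \<Psi> = (\<Sum>x\<in>supp f. \<Sum>y\<in>supp g. f x * g y * \<Psi> (x @ y))"
proof -
  let ?P = "supp f \<times> supp g"
  let ?cat = "\<lambda>(x, y). x @ y :: nat list"
  have P: "finite ?P" using assms by (simp add: fsupp_iff_finite_supp)
  then have T: "finite (?cat ` ?P)" by simp
  have "pair (amul f g) \<Psi> = (\<Sum>w\<in>?cat ` ?P. amul f g w * \<Psi> w)"
    by (rule pair_eq_sum_superset[OF T supp_amul[OF assms]])
  also have "\<dots> = (\<Sum>w\<in>?cat ` ?P. \<Sum>p\<in>{p\<in>?P. ?cat p = w}. (\<lambda>(x, y). f x * g y * \<Psi> (x @ y)) p)"
    by (rule sum.cong[OF refl])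
      (auto simp: amul_eq_sum_factorizations[OF assms] sum_distrib_right intro!: sum.cong)
  also have "\<dots> = (\<Sum>(x, y)\<in>?P. f x * g y * \<Psi> (x @ y))"
    by (rule sum.group[OF P T]) simp
  finally show ?thesis by (simp add: sum.cartesian_product)
qed

lemma pair_amul_left:
  fixes f g :: "'k::field elt"
  assumes "fsupp f" "fsupp g"
  shows "pair (amul f g) \<Psi> = pair f (\<lambda>x. pair g (\<lambda>y. \<Psi> (x @ y)))"
  unfolding pair_amul_double_sum[OF assms] unfolding pair_def sum_distrib_left
  by (intro sum.cong refl) (simp add: mult.assoc)

lemma pair_amul_right:
  fixes f g :: "'k::field elt"
  assumes "fsupp f" "fsupp g"
  shows "pair (amul f g) \<Psi> = pair g (\<lambda>y. pair f (\<lambda>x. \<Psi> (x @ y)))"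
  unfolding pair_amul_double_sum[OF assms] unfolding pair_def sum_distrib_left
  by (subst sum.swap) (intro sum.cong refl, simp add: algebra_simps)

lemma pair_amul_assoc:
  fixes f g h :: "'k::field elt"
  assumes "fsupp f" "fsupp g" "fsupp h"
  shows "pair (amul (amul f g) h) \<Psi> = pair (amul f (amul g h)) \<Psi>"
  by (simp add: assms fsupp_amul pair_amul_left)

lemma Ahom_amul:
  fixes f g :: "'k::field elt"
  assumes "f \<in> Ahom d" "g \<in> Ahom e"
  shows "amul f g \<in> Ahom (d + e)"
proof -
  have fg: "fsupp f" "fsupp g" using assms by (auto simp: Ahom_def)
  have "length w = d + e" if "w \<in> supp (amul f g)" for w
    using supp_amul[OF fg] that assms by (auto simp: Ahom_def supp_def)
  then show ?thesis using fsupp_amul[OF fg] by (auto simp: Ahom_def supp_def)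
qed

lemma sum_apply: "(\<Sum>i\<in>A. f i) x = (\<Sum>i\<in>A. f i x)"
  by (induct A rule: infinite_finite_induct) auto

lemma fsupp_eq_sum_monos:
  assumes "fsupp (f :: 'k::field elt)"
  shows "f = (\<Sum>w\<in>supp f. smul (f w) (mono w))"
proof
  fix v
  have "(\<Sum>w\<in>supp f. smul (f w) (mono w)) v = (\<Sum>w\<in>supp f. if v = w then f w else 0)"
    by (simp add: sum_apply smul_def mono_def) (intro sum.cong, auto)
  also have "\<dots> = f v" using assms by (simp add: fsupp_iff_finite_supp supp_def)
  finally show "f v = (\<Sum>w\<in>supp f. smul (f w) (mono w)) v" by simp
qed

section \<open>Separating a vector from a subspace by a linear form\<close>

lemma (in vector_space) exists_linear_form_separating:
  assumes "subspace S" "x \<notin> S"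
  obtains f where "Vector_Spaces.linear scale (*) f" "\<forall>s\<in>S. f s = 0" "f x = 1"
proof -
  interpret scalars: vector_space "(*) :: 'a \<Rightarrow> 'a \<Rightarrow> 'a"
    by unfold_locales (auto simp: algebra_simps)
  interpret vector_space_pair scale "(*) :: 'a \<Rightarrow> 'a \<Rightarrow> 'a" ..
  obtain B where B: "B \<subseteq> S" "independent B" "S \<subseteq> span B"
    using maximal_independent_subset by blast
  have "x \<notin> span B" using B(1) assms span_minimal by blast
  then have "independent (insert x B)" "x \<notin> B"
    using independent_insertI[OF _ B(2)] span_base by blast+
  then obtain f where f: "Vector_Spaces.linear scale (*) f"
      "\<forall>v\<in>insert x B. f v = (if v = x then 1 else 0)"
    using linear_independent_extend[of "insert x B" "\<lambda>v. if v = x then 1 else 0"] by blast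
  have "\<forall>s\<in>S. f s = 0"
    using B(3) linear_eq_0_on_span[OF f(1)] f(2) \<open>x \<notin> B\<close> by (metis insert_iff subsetD)
  with f show thesis using that by simp
qed

global_interpretation elt: vector_space "smul :: 'k::field \<Rightarrow> 'k elt \<Rightarrow> 'k elt"
  by unfold_locales (auto simp: smul_def fun_eq_iff algebra_simps)

lemma Bsum_sumI: "\<forall>j\<in>{1..k}. b j \<in> Bj j \<Longrightarrow> (\<lambda>w. \<Sum>j\<in>{1..k}. b j w) \<in> Bsum k"
  unfolding Bsum_def by blast

lemma Bsum_subspace: "elt.subspace (Bsum k :: 'k::field elt set)"
proof (rule elt.subspaceI)
  have "(\<lambda>w. \<Sum>j\<in>{1..k}. (0 :: 'k elt) w) \<in> Bsum k"
    by (rule Bsum_sumI) (simp add: Bj_def kspan.zero)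
  then show "0 \<in> (Bsum k :: 'k elt set)" by (simp add: zero_fun_def)
next
  fix x y :: "'k elt" assume "x \<in> Bsum k" "y \<in> Bsum k"
  then obtain bx bz where "x = (\<lambda>w. \<Sum>j\<in>{1..k}. bx j w)" "\<forall>j\<in>{1..k}. bx j \<in> Bj j"
    and "y = (\<lambda>w. \<Sum>j\<in>{1..k}. bz j w)" "\<forall>j\<in>{1..k}. bz j \<in> Bj j"
    by (auto simp: Bsum_def)
  then show "x + y \<in> Bsum k"
    using Bsum_sumI[of k "\<lambda>j w. bx j w + bz j w"]
    by (simp add: Bj_def kspan.add sum.distrib plus_fun_def)
next
  fix c and x :: "'k elt" assume "x \<in> Bsum k"
  then obtain bx where x: "x = (\<lambda>w. \<Sum>j\<in>{1..k}. bx j w)" "\<forall>j\<in>{1..k}. bx j \<in> Bj j"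
    by (auto simp: Bsum_def)
  then have "smul c x = (\<lambda>w. \<Sum>j\<in>{1..k}. smul c (bx j) w)"
    by (simp add: smul_def sum_distrib_left)
  then show "smul c x \<in> Bsum k"
    using Bsum_sumI[of k "\<lambda>j. smul c (bx j)"] x(2) by (simp add: Bj_def kspan.scal)
qed

lemma Bgen_subset_Bsum:
  assumes "j \<in> {1..k}"
  shows "Bgen j \<subseteq> (Bsum k :: 'k::field elt set)"
proof
  fix e :: "'k elt" assume e: "e \<in> Bgen j"
  let ?b = "\<lambda>i w. if i = j then e w else 0"
  have "\<forall>i\<in>{1..k}. ?b i \<in> Bj i"
  proof
    fix i show "?b i \<in> Bj i"
      by (cases "i = j") (simp_all add: Bj_def kspan.base kspan.zero e)
  qed
  then have "(\<lambda>w. \<Sum>i\<in>{1..k}. ?b i w) \<in> Bsum k" by (rule Bsum_sumI)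
  moreover have "(\<lambda>w. \<Sum>i\<in>{1..k}. ?b i w) = e" using assms by (simp add: fun_eq_iff)
  ultimately show "e \<in> Bsum k" by simp
qed

section \<open>B-annihilating forms\<close>

definition B_annihilating :: "nat \<Rightarrow> 'k::field elt \<Rightarrow> bool" where
  "B_annihilating k \<Psi> \<longleftrightarrow> (\<forall>j\<in>{1..k}. \<forall>z\<in>(Zset j :: 'k elt set). \<forall>x y.
      100 ^ (j^2) dvd length x \<longrightarrow> pair z (\<lambda>w. \<Psi> (x @ w @ y)) = 0)"

lemma B_annihilatingI:
  assumes "\<And>j z x y. j \<in> {1..k} \<Longrightarrow> z \<in> Zset j \<Longrightarrow> 100 ^ (j^2) dvd length x \<Longrightarrow>
    pair z (\<lambda>w. \<Psi> (x @ w @ y)) = 0"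
  shows "B_annihilating k \<Psi>"
  using assms unfolding B_annihilating_def by blast

lemma Suc_Zlen: "Suc (Zlen j) = 100 ^ (j^2)"
  by (simp add: Zlen_def)

lemma Zlen_pos: "j \<ge> 1 \<Longrightarrow> 0 < Zlen j"
proof -
  assume "j \<ge> 1"
  then have "1 < (100::nat) ^ (j^2)" by (intro one_less_power) auto
  then show ?thesis by (simp add: Zlen_def)
qed

lemma Zset_fsupp: "z \<in> Zset j \<Longrightarrow> fsupp z"
  by (auto simp: Zset_def intro!: fsupp_smul fsupp_add fsupp_mono)

lemma Zset_length: "z \<in> Zset j \<Longrightarrow> z w \<noteq> 0 \<Longrightarrow> length w = Zlen j"
  by (auto simp: Zset_def smul_def mono_def split: if_splits)

lemma power_100_dvd: "j \<le> k \<Longrightarrow> (100::nat) ^ (j^2) dvd 100 ^ (k^2)"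
  by (rule le_imp_power_dvd) (simp add: power_mono)

lemma dvd_less_imp_add_le:
  fixes a b N :: nat
  assumes "N dvd a" "N dvd b" "a < b"
  shows "a + N \<le> b"
proof -
  have "N dvd b - a" using assms by (simp add: dvd_diff_nat)
  then have "N \<le> b - a" using assms(3) by (simp add: dvd_imp_le)
  then show ?thesis using assms(3) by linarith
qed

lemma B_annihilating_pair_kspan:
  assumes "B_annihilating k \<Psi>" "j \<in> {1..k}" "b \<in> kspan (Bgen j)"
  shows "fsupp b \<and> pair b \<Psi> = 0"
  using assms(3)
proof (induction rule: kspan.induct)
  case zero
  then show ?case by (auto simp: fsupp_def intro: pair_eq_0)
next
  case (base e)
  then obtain u z v m where e: "e = amul (amul u z) v" and u: "u \<in> Ahom (m * 100 ^ (j^2))"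
    and z: "z \<in> Zset j" and v: "v \<in> A1" by (auto simp: Bgen_def)
  have fs: "fsupp u" "fsupp z" "fsupp v"
    using u v Zset_fsupp[OF z] by (auto simp: Ahom_def A1_def)
  have "pair e \<Psi> = pair v (\<lambda>y. pair u (\<lambda>x. pair z (\<lambda>w. \<Psi> (x @ w @ y))))"
    unfolding e pair_amul_right[OF fsupp_amul[OF fs(1,2)] fs(3)] pair_amul_left[OF fs(1,2)]
    by simp
  also have "\<dots> = 0"
  proof (rule pair_eq_0, rule pair_eq_0)
    fix y x assume "v y \<noteq> 0" "u x \<noteq> 0"
    then have "100 ^ (j^2) dvd length x" using u by (simp add: Ahom_def)
    then show "pair z (\<lambda>w. \<Psi> (x @ w @ y)) = 0"
      using assms(1,2) z by (simp add: B_annihilating_def)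
  qed
  finally show ?case using e fs by (simp add: fsupp_amul)
next
  case (add x y)
  then show ?case by (simp add: pair_add fsupp_add)
next
  case (scal x c)
  then show ?case by (simp add: pair_smul fsupp_smul)
qed

lemma B_annihilating_pair_Bsum:
  assumes "B_annihilating k \<Psi>" "b \<in> Bsum k"
  shows "pair b \<Psi> = 0"
proof -
  obtain bs where b: "b = (\<lambda>w. \<Sum>j\<in>{1..k}. bs j w)" and bs: "\<forall>j\<in>{1..k}. bs j \<in> Bj j"
    using assms(2) by (auto simp: Bsum_def)
  have "fsupp (\<lambda>w. \<Sum>j\<in>J. bs j w) \<and> pair (\<lambda>w. \<Sum>j\<in>J. bs j w) \<Psi> = 0"
    if "finite J" "J \<subseteq> {1..k}" for J
    using that
  proof (induction J rule: finite_induct)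
    case empty
    then show ?case by (auto simp: fsupp_def intro: pair_eq_0)
  next
    case (insert i J)
    then have "fsupp (bs i) \<and> pair (bs i) \<Psi> = 0"
      using B_annihilating_pair_kspan[OF assms(1)] bs by (auto simp: Bj_def)
    with insert show ?case by (simp add: pair_add fsupp_add)
  qed
  then show ?thesis unfolding b by blast
qed

lemma exists_B_annihilating_detecting:
  assumes "fsupp (a :: 'k::field elt)" "a \<notin> Bsum k"
  obtains \<psi> where "B_annihilating k \<psi>" "pair a \<psi> \<noteq> 0"
proof -
  obtain g where g: "Vector_Spaces.linear smul ((*) :: 'k \<Rightarrow> 'k \<Rightarrow> 'k) g"
    "\<forall>s\<in>Bsum k. g s = 0" "g a = 1"
    using elt.exists_linear_form_separating[OF Bsum_subspace assms(2)] by blast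
  interpret scalars: vector_space "(*) :: 'k \<Rightarrow> 'k \<Rightarrow> 'k"
    by unfold_locales (auto simp: algebra_simps)
  interpret vector_space_pair smul "(*) :: 'k \<Rightarrow> 'k \<Rightarrow> 'k" ..
  define \<psi> where "\<psi> w = g (mono w)" for w
  have pair_eq_g: "pair f \<psi> = g f" if "fsupp f" for f
  proof -
    have "g f = g (\<Sum>w\<in>supp f. smul (f w) (mono w))" using fsupp_eq_sum_monos[OF that] by simp
    also have "\<dots> = (\<Sum>w\<in>supp f. f w * \<psi> w)"
      by (simp add: linear_sum[OF g(1)] linear_scale[OF g(1)] \<psi>_def)
    finally show ?thesis by (simp add: pair_def)
  qed
  have "B_annihilating k \<psi>"
  proof (rule B_annihilatingI)
    fix j z and x y :: "nat list" assume j: "j \<in> {1..k}" and z: "z \<in> (Zset j :: 'k elt set)"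
      and x: "100 ^ (j^2) dvd length x"
    let ?e = "amul (amul (mono x) z) (mono y) :: 'k elt"
    have fs: "fsupp z" "fsupp (amul (mono x) z)"
      using Zset_fsupp[OF z] by (auto intro: fsupp_amul fsupp_mono)
    have "mono x \<in> (Ahom (length x div 100 ^ (j^2) * 100 ^ (j^2)) :: 'k elt set)"
      using x fsupp_mono[of x] by (simp add: Ahom_def mono_def)
    then have "?e \<in> Bgen j" using z fsupp_mono unfolding Bgen_def A1_def by blast
    then have "g ?e = 0" using g(2) Bgen_subset_Bsum[OF j] by blast
    moreover have "pair ?e \<psi> = pair z (\<lambda>w. \<psi> (x @ w @ y))"
      unfolding pair_amul_right[OF fs(2) fsupp_mono] pair_mono pair_amul_left[OF fsupp_mono fs(1)]
      by simp
    ultimately show "pair z (\<lambda>w. \<psi> (x @ w @ y)) = 0"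
      using pair_eq_g fs by (simp add: fsupp_amul fsupp_mono)
  qed
  moreover have "pair a \<psi> \<noteq> 0" using pair_eq_g[OF assms(1)] g(3) by simp
  ultimately show thesis using that by blast
qed

lemma B_annihilating_Nil_indicator:
  assumes "k \<ge> 1"
  shows "B_annihilating k ((\<lambda>w. if w = [] then 1 else 0) :: 'k::field elt)"
proof (rule B_annihilatingI)
  fix j x y and z :: "'k elt" assume "j \<in> {1..k}" "z \<in> Zset j"
  then show "pair z (\<lambda>w. if x @ w @ y = [] then 1 else 0) = 0"
    using Zlen_pos[of j] by (intro pair_eq_0) (auto dest: Zset_length)
qed

section \<open>Products of B-annihilating forms\<close>

definition tensor_form :: "nat \<Rightarrow> 'k::field elt \<Rightarrow> 'k elt \<Rightarrow> 'k elt" where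
  "tensor_form d \<Phi> \<Theta> w = (if d \<le> length w then \<Phi> (take d w) * \<Theta> (drop d w) else 0)"

definition snoc_form :: "nat \<Rightarrow> nat \<Rightarrow> 'k::field elt \<Rightarrow> 'k elt" where
  "snoc_form l c \<psi> v = (if length v = Suc l \<and> last v = c then \<psi> (butlast v) else 0)"

lemma pair_amul_tensor_form:
  fixes f g :: "'k::field elt"
  assumes "f \<in> Ahom d" "fsupp g"
  shows "pair (amul f g) (tensor_form d \<Phi> \<Theta>) = pair f \<Phi> * pair g \<Theta>"
proof -
  have f: "fsupp f" using assms(1) by (simp add: Ahom_def)
  have "pair (amul f g) (tensor_form d \<Phi> \<Theta>) = pair f (\<lambda>x. pair g \<Theta> * \<Phi> x)"
    unfolding pair_amul_left[OF f assms(2)]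
  proof (rule pair_cong)
    fix x assume "f x \<noteq> 0"
    then have "length x = d" using assms(1) by (simp add: Ahom_def)
    then show "pair g (\<lambda>y. tensor_form d \<Phi> \<Theta> (x @ y)) = pair g \<Theta> * \<Phi> x"
      using pair_cmult[of g "\<Phi> x" \<Theta>] by (simp add: tensor_form_def mult.commute)
  qed
  also have "\<dots> = pair g \<Theta> * pair f \<Phi>" by (rule pair_cmult)
  finally show ?thesis by (simp add: mult.commute)
qed

lemma pair_amul_gen_snoc_form:
  fixes f :: "'k::field elt"
  assumes "f \<in> Ahom l"
  shows "pair (amul f (gen c)) (snoc_form l c \<psi>) = pair f \<psi>"
proof -
  have "fsupp f" using assms by (simp add: Ahom_def)
  then have "pair (amul f (gen c)) (snoc_form l c \<psi>) = pair f (\<lambda>x. snoc_form l c \<psi> (x @ [c]))"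
    by (simp add: pair_amul_left gen_def fsupp_mono pair_mono)
  also have "\<dots> = pair f \<psi>"
    using assms by (intro pair_cong) (simp add: snoc_form_def Ahom_def)
  finally show ?thesis .
qed

lemma B_annihilating_tensor_form:
  fixes \<Phi> \<Theta> :: "'k::field elt"
  assumes \<Phi>: "B_annihilating k \<Phi>" and \<Theta>: "B_annihilating k \<Theta>" and d: "100 ^ (k^2) dvd d"
  shows "B_annihilating k (tensor_form d \<Phi> \<Theta>)"
proof (rule B_annihilatingI)
  fix j and z :: "'k elt" and x y :: "nat list"
  assume j: "j \<in> {1..k}" and z: "z \<in> Zset j" and x: "100 ^ (j^2) dvd length x"
  have "100 ^ (j^2) dvd d" using power_100_dvd[of j k] j d by (auto intro: dvd_trans)
  have lw: "length w = Zlen j" if "z w \<noteq> 0" for w using Zset_length[OF z that] .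
  show "pair z (\<lambda>w. tensor_form d \<Phi> \<Theta> (x @ w @ y)) = 0"
  proof (cases "length x < d")
    case True
    \<comment> \<open>the placed factor \<open>z\<close> cannot straddle position \<open>d\<close>, so it lies in the \<open>\<Phi>\<close>-part\<close>
    then have "length x + Suc (Zlen j) \<le> d"
      using dvd_less_imp_add_le[OF x \<open>100 ^ (j^2) dvd d\<close>] by (simp add: Suc_Zlen)
    define r where "r = d - length x - Zlen j"
    define C where "C = (if r \<le> length y then \<Theta> (drop r y) else 0)"
    have "pair z (\<lambda>w. tensor_form d \<Phi> \<Theta> (x @ w @ y)) = pair z (\<lambda>w. C * \<Phi> (x @ w @ take r y))"
      using \<open>length x + Suc (Zlen j) \<le> d\<close>
      by (intro pair_cong) (auto simp: tensor_form_def C_def r_def dest!: lw)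
    also have "\<dots> = 0"
      using \<Phi> j z x by (simp add: pair_cmult B_annihilating_def)
    finally show ?thesis .
  next
    case False
    have "100 ^ (j^2) dvd length (drop d x)"
      using x \<open>100 ^ (j^2) dvd d\<close> by simp
    have "pair z (\<lambda>w. tensor_form d \<Phi> \<Theta> (x @ w @ y))
        = pair z (\<lambda>w. \<Phi> (take d x) * \<Theta> (drop d x @ w @ y))"
      using False by (intro pair_cong) (simp add: tensor_form_def)
    also have "\<dots> = 0"
      using \<Theta> j z \<open>100 ^ (j^2) dvd length (drop d x)\<close> by (simp add: pair_cmult B_annihilating_def)
    finally show ?thesis .
  qed
qed

lemma B_annihilating_snoc_form:
  fixes \<psi> :: "'k::field elt"
  assumes \<psi>: "B_annihilating k \<psi>" and l: "100 ^ (k^2) dvd Suc l"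
  shows "B_annihilating k (snoc_form l c \<psi>)"
proof (rule B_annihilatingI)
  fix j and z :: "'k elt" and x y :: "nat list"
  assume j: "j \<in> {1..k}" and z: "z \<in> Zset j" and x: "100 ^ (j^2) dvd length x"
  have "100 ^ (j^2) dvd Suc l" using power_100_dvd[of j k] j l by (auto intro: dvd_trans)
  have lw: "length w = Zlen j" if "z w \<noteq> 0" for w using Zset_length[OF z that] .
  show "pair z (\<lambda>w. snoc_form l c \<psi> (x @ w @ y)) = 0"
  proof (cases "length x + Zlen j + length y = Suc l")
    case False
    then show ?thesis by (intro pair_eq_0) (auto simp: snoc_form_def dest!: lw)
  next
    case True
    \<comment> \<open>the placed factor \<open>z\<close> cannot reach the last letter\<close>
    have "y \<noteq> []"
    proof
      assume "y = []"
      then have "length x < Suc l" using True Zlen_pos[of j] j by simp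
      then have "length x + Suc (Zlen j) \<le> Suc l"
        using dvd_less_imp_add_le[OF x \<open>100 ^ (j^2) dvd Suc l\<close>] by (simp add: Suc_Zlen)
      with True \<open>y = []\<close> show False by simp
    qed
    define C where "C = (if last y = c then 1 else 0 :: 'k)"
    have "pair z (\<lambda>w. snoc_form l c \<psi> (x @ w @ y)) = pair z (\<lambda>w. C * \<psi> (x @ w @ butlast y))"
      using True \<open>y \<noteq> []\<close>
      by (intro pair_cong) (auto simp: snoc_form_def C_def butlast_append dest!: lw)
    also have "\<dots> = 0"
      using \<psi> j z x by (simp add: pair_cmult B_annihilating_def)
    finally show ?thesis .
  qed
qed

lemma interleave_detected_by_B_annihilating:
  fixes a :: "nat \<Rightarrow> 'k::field elt"
  assumes "k \<ge> 1"
    and "\<forall>i\<in>{1..n}. a i \<in> Afree"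
    and "\<forall>i\<in>{1..n}. \<exists>p::nat. p > 0 \<and> a i \<in> Ahom (100 ^ (k^2) * p - 1)"
    and "\<forall>i\<in>{1..n}. a i \<notin> Bsum k"
  shows "\<exists>\<Psi> d. interleave n a m \<in> Ahom d \<and> 100 ^ (k^2) dvd d \<and> B_annihilating k \<Psi> \<and>
           pair (interleave n a m) \<Psi> \<noteq> 0"
  using assms(2-4)
proof (induction n)
  case 0
  have "(mono [] :: 'k elt) \<in> Ahom 0" using fsupp_mono[of "[]"] by (simp add: Ahom_def mono_def)
  then show ?case
    using B_annihilating_Nil_indicator[OF assms(1)] by (force simp: interleave_def pair_mono)
next
  case (Suc n)
  then obtain \<Psi> d where \<Psi>: "interleave n a m \<in> Ahom d" "100 ^ (k^2) dvd d"
    "B_annihilating k \<Psi>" "pair (interleave n a m) \<Psi> \<noteq> 0"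
    by auto
  have i: "Suc n \<in> {1..Suc n}" by simp
  obtain p :: nat where "p > 0" and a_hom: "a (Suc n) \<in> Ahom (100 ^ (k^2) * p - 1)"
    using Suc.prems(2) i by blast
  define l where "l = 100 ^ (k^2) * p - 1"
  have l: "Suc l = 100 ^ (k^2) * p" using \<open>p > 0\<close> by (simp add: l_def)
  have a: "a (Suc n) \<in> Ahom l" using a_hom by (simp only: l_def)
  have "fsupp (a (Suc n))" "a (Suc n) \<notin> Bsum k" using Suc.prems(1,3) i by (auto simp: Afree_def)
  then obtain \<psi> where \<psi>: "B_annihilating k \<psi>" "pair (a (Suc n)) \<psi> \<noteq> 0"
    by (rule exists_B_annihilating_detecting)
  let ?c = "m (Suc n)"
  let ?\<Psi> = "tensor_form d \<Psi> (snoc_form l ?c \<psi>)"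
  have gen: "gen ?c \<in> (Ahom 1 :: 'k elt set)"
    using fsupp_mono[of "[?c]"] by (simp add: Ahom_def gen_def mono_def)
  have fs: "fsupp (interleave n a m)" "fsupp (a (Suc n))" "fsupp (gen ?c :: 'k elt)"
    using \<Psi>(1) a gen by (auto simp: Ahom_def)
  have step: "interleave (Suc n) a m = amul (amul (interleave n a m) (a (Suc n))) (gen ?c)"
    by (simp add: interleave_def)
  have "interleave (Suc n) a m \<in> Ahom (d + l + 1)"
    unfolding step by (intro Ahom_amul \<Psi>(1) a gen)
  moreover have "100 ^ (k^2) dvd d + l + 1"
  proof -
    have "d + l + 1 = d + 100 ^ (k^2) * p" using l by linarith
    show ?thesis unfolding \<open>d + l + 1 = d + 100 ^ (k^2) * p\<close> using \<Psi>(2) by simp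
  qed
  moreover have "B_annihilating k ?\<Psi>"
    by (intro B_annihilating_tensor_form B_annihilating_snoc_form \<Psi>(2,3) \<psi>(1)) (simp add: l)
  moreover have "pair (interleave (Suc n) a m) ?\<Psi> = pair (interleave n a m) \<Psi> * pair (a (Suc n)) \<psi>"
  proof -
    have "pair (interleave (Suc n) a m) ?\<Psi>
        = pair (amul (interleave n a m) (amul (a (Suc n)) (gen ?c))) ?\<Psi>"
      unfolding step using fs by (rule pair_amul_assoc)
    also have "\<dots> = pair (interleave n a m) \<Psi> * pair (amul (a (Suc n)) (gen ?c)) (snoc_form l ?c \<psi>)"
      using \<Psi>(1) fs by (simp add: pair_amul_tensor_form fsupp_amul)
    also have "\<dots> = pair (interleave n a m) \<Psi> * pair (a (Suc n)) \<psi>"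
      using a by (simp add: pair_amul_gen_snoc_form)
    finally show ?thesis .
  qed
  ultimately show ?case using \<Psi>(4) \<psi>(2) by (metis mult_eq_0_iff)
qed

theorem mainTheorem5:
  fixes k n :: nat and a :: "nat \<Rightarrow> 'k::field elt" and m :: "nat \<Rightarrow> nat"
  assumes "k \<ge> 1" and "n \<ge> 1"
    and "\<forall>i\<in>{1..n}. a i \<in> Afree"
    and "\<forall>i\<in>{1..n}. \<exists>p::nat. p > 0 \<and> a i \<in> Ahom (100 ^ (k^2) * p - 1)"
    and "\<forall>i\<in>{1..n}. a i \<notin> Bsum k"
  shows "interleave n a m \<notin> Bsum k"
proof
  assume "interleave n a m \<in> Bsum k"
  moreover obtain \<Psi> where "B_annihilating k \<Psi>" "pair (interleave n a m) \<Psi> \<noteq> 0"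
    using interleave_detected_by_B_annihilating[OF assms(1,3-5)] by blast
  ultimately show False using B_annihilating_pair_Bsum by blast
qed

end
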